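(* Let $A$ and $B$ be observed binary variables. Every functional causal structure over $A,B$ whose latent variables are discrete with finitely many values (not necessarily binary) is observationally equivalent to a functional causal structure over $A,B$ all of whose latent variables are binary. Equivalently, every observational equivalence class of such functional causal structures contains one in which all latent variables are binary.
   Context: A functional causal structure over observed variables $A,B$ is a directed acyclic graph together with a specification of each observed variable as a function of its causal parents; all latent (unobserved) variables are parentless. A causal model is a functional causal structure together with a probability distribution over the values of each (independent) latent variable; each causal model induces a joint distribution $\mathbb{P}(A,B)$. By convention latent variables are nontrivial: every value of every latent variable has probability strictly between $0$ and $1$. The set of joint distributions of a functional causal structure is the set of all $\mathbb{P}(A,B)$ arising from some choice of such latent distributions. Two functional causal structures are observationally equivalent if they have the same set of joint distributions over the observed variables. *)

theory Defs
  imports Complex_Main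
begin

text \<open>
Latent variables are numbered 0, ..., nlat - 1; latent i takes values in
{0..<card_lat i}. All latents are parentless. The observed variables are
functions of their parents: A's parents are the latents in parA plus B
(iff B_to_A); B's parents are the latents in parB plus A (iff A_to_B).
A latent assignment is a function nat => nat; fA gets the latent assignment
and the value of B, fB gets the latent assignment and the value of A; the
locality conditions in wf_fcs say that they depend only on the parents.
\<close>

record fcs =
  nlat :: nat
  card_lat :: "nat \<Rightarrow> nat"
  A_to_B :: bool
  B_to_A :: bool
  parA :: "nat set"
  parB :: "nat set"
  fA :: "(nat \<Rightarrow> nat) \<Rightarrow> bool \<Rightarrow> bool"
  fB :: "(nat \<Rightarrow> nat) \<Rightarrow> bool \<Rightarrow> bool"

text \<open>Well-formedness: acyclic (no 2-cycle between A and B), latent parents are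
latent variables, every latent is discrete with finitely many (at least two,
so that it can be nontrivial) values, and each observed variable depends only
on its parents.\<close>

definition wf_fcs :: "fcs \<Rightarrow> bool" where
  "wf_fcs S \<longleftrightarrow>
     \<not> (A_to_B S \<and> B_to_A S) \<and>
     parA S \<subseteq> {..<nlat S} \<and> parB S \<subseteq> {..<nlat S} \<and>
     (\<forall>i<nlat S. 2 \<le> card_lat S i) \<and>
     (\<forall>l l' b b'. (\<forall>i\<in>parA S. l i = l' i) \<and> (B_to_A S \<longrightarrow> b = b')
         \<longrightarrow> fA S l b = fA S l' b') \<and>
     (\<forall>l l' a a'. (\<forall>i\<in>parB S. l i = l' i) \<and> (A_to_B S \<longrightarrow> a = a')
         \<longrightarrow> fB S l a = fB S l' a')"

definition binary_fcs :: "fcs \<Rightarrow> bool" where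
  "binary_fcs S \<longleftrightarrow> (\<forall>i<nlat S. card_lat S i = 2)"

text \<open>Finite set of latent assignments (values outside the latent index range
are normalised to 0).\<close>

definition assignments :: "fcs \<Rightarrow> (nat \<Rightarrow> nat) set" where
  "assignments S = {l. (\<forall>i<nlat S. l i < card_lat S i) \<and> (\<forall>i\<ge>nlat S. l i = 0)}"

text \<open>Observed values (A, B) determined by a latent assignment, evaluating the
DAG in topological order.\<close>

definition obs :: "fcs \<Rightarrow> (nat \<Rightarrow> nat) \<Rightarrow> bool \<times> bool" where
  "obs S l = (if B_to_A S
              then (let b = fB S l False in (fA S l b, b))
              else (let a = fA S l False in (a, fB S l a)))"

definition latent_dist :: "fcs \<Rightarrow> (nat \<Rightarrow> nat \<Rightarrow> real) \<Rightarrow> bool" where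
  "latent_dist S p \<longleftrightarrow>
     (\<forall>i<nlat S. (\<forall>v<card_lat S i. 0 < p i v \<and> p i v < 1) \<and>
                 (\<Sum>v<card_lat S i. p i v) = 1)"

definition induced :: "fcs \<Rightarrow> (nat \<Rightarrow> nat \<Rightarrow> real) \<Rightarrow> bool \<Rightarrow> bool \<Rightarrow> real" where
  "induced S p a b =
     (\<Sum>l\<in>assignments S. (\<Prod>i<nlat S. p i (l i)) * (if obs S l = (a, b) then 1 else 0))"

definition joint_dists :: "fcs \<Rightarrow> (bool \<Rightarrow> bool \<Rightarrow> real) set" where
  "joint_dists S = {P. \<exists>p. latent_dist S p \<and> P = induced S p}"

definition obs_equiv :: "fcs \<Rightarrow> fcs \<Rightarrow> bool" where
  "obs_equiv S T \<longleftrightarrow> joint_dists S = joint_dists T"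

end

theory Submission
  imports Defs
begin

text \<open>A latent with \<open>k \<ge> 3\<close> values is replaced by one with \<open>k - 1\<close> values together with a fresh
binary latent that has the same children: the pairs \<open>(k-2, 0)\<close> and \<open>(k-2, 1)\<close> stand for the old
values \<open>k - 2\<close> and \<open>k - 1\<close>, every other pair \<open>(x, y)\<close> for \<open>x\<close>. Independent distributions on the
new pair multiply out to a distribution on the old latent; conversely, a distribution on the old
latent is recovered by merging its last two values and giving the binary latent the conditional
probability of \<open>k - 2\<close> given \<open>{k - 2, k - 1}\<close>. Both translations keep all probabilities strictly
between 0 and 1, so the two structures have the same joint distributions, and iterating the
split makes every latent binary.\<close>

lemma Suc_2_le_iff_ex: "2 \<le> k \<longleftrightarrow> (\<exists>r. k = Suc (Suc r))"
  by presburger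

lemma Suc_3_le_iff_ex: "3 \<le> k \<longleftrightarrow> (\<exists>r. k = Suc (Suc (Suc r)))"
  by presburger

definition merged_value :: "nat \<Rightarrow> nat \<Rightarrow> nat \<Rightarrow> nat" where
  "merged_value k x y = (if x = k - 2 \<and> y = 1 then k - 1 else x)"

definition merged_prob :: "nat \<Rightarrow> (nat \<Rightarrow> real) \<Rightarrow> (nat \<Rightarrow> real) \<Rightarrow> nat \<Rightarrow> real" where
  "merged_prob k f g v =
     (if v < k - 2 then f v else if v = k - 2 then f (k - 2) * g 0 else f (k - 2) * g 1)"

lemma sum_merged_value_fiber:
  fixes f g :: "nat \<Rightarrow> real"
  assumes k: "3 \<le> k" and v: "v < k" and g: "g 0 + g 1 = 1"
  shows "(\<Sum>(x, y)\<in>{(x, y). x < k - 1 \<and> y < 2 \<and> merged_value k x y = v}. f x * g y)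
         = merged_prob k f g v"
proof -
  consider "v < k - 2" | "v = k - 2" | "v = k - 1" using v by linarith
  then show ?thesis
  proof cases
    case 1
    then have "{(x, y). x < k - 1 \<and> y < 2 \<and> merged_value k x y = v} = {(v, 0), (v, 1)}"
      using k by (auto simp: merged_value_def)
    then show ?thesis
      using 1 g by (simp add: merged_prob_def flip: distrib_left)
  next
    case 2
    then have "{(x, y). x < k - 1 \<and> y < 2 \<and> merged_value k x y = v} = {(k - 2, 0)}"
      using k by (auto simp: merged_value_def)
    then show ?thesis using 2 by (simp add: merged_prob_def)
  next
    case 3
    then have "{(x, y). x < k - 1 \<and> y < 2 \<and> merged_value k x y = v} = {(k - 2, 1)}"
      using k by (auto simp: merged_value_def)
    moreover have "\<not> v < k - 2" "v \<noteq> k - 2" using 3 k by auto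
    ultimately show ?thesis by (simp add: merged_prob_def)
  qed
qed

lemma merged_prob_bounds:
  fixes f g :: "nat \<Rightarrow> real"
  assumes "\<And>v. v < k - 1 \<Longrightarrow> 0 < f v \<and> f v < 1"
    and "0 < g 0" "g 0 < 1" "0 < g 1" "g 1 < 1" and "3 \<le> k" "v < k"
  shows "0 < merged_prob k f g v \<and> merged_prob k f g v < 1"
proof -
  have "0 < f (k - 2)" "f (k - 2) < 1" using assms(1)[of "k - 2"] assms(6) by auto
  then have "f (k - 2) * g y < 1" if "0 < g y" "g y < 1" for y
    using that mult_strict_mono[of "f (k - 2)" 1 "g y" 1] by simp
  with assms show ?thesis by (auto simp: merged_prob_def)
qed

lemma sum_merged_prob:
  fixes f g :: "nat \<Rightarrow> real"
  assumes "3 \<le> k" and "g 0 + g 1 = 1"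
  shows "(\<Sum>v<k. merged_prob k f g v) = (\<Sum>v<k - 1. f v)"
proof -
  obtain r where k: "k = Suc (Suc (Suc r))" using assms(1) by (metis Suc_3_le_iff_ex)
  have "f (Suc r) * g 0 + f (Suc r) * g 1 = f (Suc r)"
    using assms(2) by (simp flip: distrib_left)
  moreover have "(\<Sum>v<Suc r. merged_prob k f g v) = (\<Sum>v<Suc r. f v)"
    using k by (intro sum.cong) (auto simp: merged_prob_def)
  ultimately show ?thesis by (simp add: k merged_prob_def)
qed

definition lump_prob :: "nat \<Rightarrow> (nat \<Rightarrow> real) \<Rightarrow> nat \<Rightarrow> real" where
  "lump_prob k f = f(k - 2 := f (k - 2) + f (k - 1))"

definition lump_bit_prob :: "nat \<Rightarrow> (nat \<Rightarrow> real) \<Rightarrow> nat \<Rightarrow> real" where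
  "lump_bit_prob k f v = (if v = 0 then f (k - 2) else f (k - 1)) / (f (k - 2) + f (k - 1))"

lemma merged_prob_lump:
  fixes f :: "nat \<Rightarrow> real"
  assumes "2 \<le> k" "v < k" "f (k - 2) + f (k - 1) \<noteq> 0"
  shows "merged_prob k (lump_prob k f) (lump_bit_prob k f) v = f v"
proof -
  have "k - 1 \<noteq> k - 2" using assms(1) by simp
  moreover consider "v < k - 2" | "v = k - 2" | "v = k - 1" using assms(2) by linarith
  ultimately show ?thesis
    by cases (use assms(3) in \<open>auto simp: merged_prob_def lump_prob_def lump_bit_prob_def\<close>)
qed

lemma lump_prob_bounds:
  fixes f :: "nat \<Rightarrow> real"
  assumes pos: "\<And>v. v < k \<Longrightarrow> 0 < f v" and sum: "(\<Sum>v<k. f v) = 1"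
    and k: "3 \<le> k" and v: "v < k - 1"
  shows "0 < lump_prob k f v \<and> lump_prob k f v < 1"
proof -
  obtain r where kr: "k = Suc (Suc (Suc r))" using k by (metis Suc_3_le_iff_ex)
  have total: "(\<Sum>w<Suc r. f w) + f (Suc r) + f (Suc (Suc r)) = 1"
    using sum kr by simp
  have "0 < (\<Sum>w<Suc r. f w)"
    using pos kr by (intro sum_pos) auto
  moreover have "f v \<le> (\<Sum>w<Suc r. f w)" if "v < Suc r"
    using that pos kr by (intro member_le_sum) (auto intro: less_imp_le)
  ultimately show ?thesis
    using pos[of v] pos[of "Suc r"] pos[of "Suc (Suc r)"] total v kr
    by (cases "v = Suc r") (auto simp: lump_prob_def)
qed

lemma sum_lump_prob:
  fixes f :: "nat \<Rightarrow> real"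
  assumes "2 \<le> k"
  shows "(\<Sum>v<k - 1. lump_prob k f v) = (\<Sum>v<k. f v)"
proof -
  obtain r where k: "k = Suc (Suc r)" using assms by (metis Suc_2_le_iff_ex)
  have "(\<Sum>v<r. lump_prob k f v) = (\<Sum>v<r. f v)"
    using k by (intro sum.cong) (auto simp: lump_prob_def)
  then show ?thesis by (simp add: k lump_prob_def)
qed

lemma lump_bit_prob_bounds:
  fixes f :: "nat \<Rightarrow> real"
  assumes "0 < f (k - 2)" "0 < f (k - 1)" "y < 2"
  shows "0 < lump_bit_prob k f y \<and> lump_bit_prob k f y < 1"
  using assms by (auto simp: lump_bit_prob_def field_simps)

lemma sum_lump_bit_prob:
  fixes f :: "nat \<Rightarrow> real"
  assumes "f (k - 2) + f (k - 1) \<noteq> 0"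
  shows "lump_bit_prob k f 0 + lump_bit_prob k f 1 = 1"
  using assms by (simp add: lump_bit_prob_def add_divide_distrib[symmetric])

definition merge_assignment :: "fcs \<Rightarrow> nat \<Rightarrow> (nat \<Rightarrow> nat) \<Rightarrow> nat \<Rightarrow> nat" where
  "merge_assignment S j l =
     (l(nlat S := 0))(j := merged_value (card_lat S j) (l j) (l (nlat S)))"

definition split_latent :: "fcs \<Rightarrow> nat \<Rightarrow> fcs" where
  "split_latent S j = S\<lparr>nlat := Suc (nlat S),
     card_lat := (card_lat S)(j := card_lat S j - 1, nlat S := 2),
     parA := (if j \<in> parA S then insert (nlat S) (parA S) else parA S),
     parB := (if j \<in> parB S then insert (nlat S) (parB S) else parB S),
     fA := (\<lambda>l b. fA S (merge_assignment S j l) b),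
     fB := (\<lambda>l a. fB S (merge_assignment S j l) a)\<rparr>"

lemma split_latent_simps:
  "nlat (split_latent S j) = Suc (nlat S)"
  "card_lat (split_latent S j) = (card_lat S)(j := card_lat S j - 1, nlat S := 2)"
  "A_to_B (split_latent S j) = A_to_B S"
  "B_to_A (split_latent S j) = B_to_A S"
  "parA (split_latent S j) = (if j \<in> parA S then insert (nlat S) (parA S) else parA S)"
  "parB (split_latent S j) = (if j \<in> parB S then insert (nlat S) (parB S) else parB S)"
  "fA (split_latent S j) = (\<lambda>l b. fA S (merge_assignment S j l) b)"
  "fB (split_latent S j) = (\<lambda>l a. fB S (merge_assignment S j l) a)"
  by (simp_all add: split_latent_def)

lemma obs_split_latent: "obs (split_latent S j) l = obs S (merge_assignment S j l)"
  by (simp add: obs_def split_latent_simps Let_def)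

lemma merge_assignment_agree:
  assumes "P \<subseteq> {..<nlat S}"
    and "\<forall>i\<in>(if j \<in> P then insert (nlat S) P else P). l i = l' i"
  shows "\<forall>i\<in>P. merge_assignment S j l i = merge_assignment S j l' i"
  using assms by (auto simp: merge_assignment_def split: if_splits)

lemma wf_split_latent:
  assumes wf: "wf_fcs S" and k: "3 \<le> card_lat S j"
  shows "wf_fcs (split_latent S j)"
proof -
  have pars: "parA S \<subseteq> {..<nlat S}" "parB S \<subseteq> {..<nlat S}"
    using wf by (simp_all add: wf_fcs_def)
  have locA: "fA S l b = fA S l' b'" if "\<forall>i\<in>parA S. l i = l' i" "B_to_A S \<longrightarrow> b = b'" for l l' b b'
    using wf that by (simp add: wf_fcs_def)
  have locB: "fB S l a = fB S l' a'" if "\<forall>i\<in>parB S. l i = l' i" "A_to_B S \<longrightarrow> a = a'" for l l' a a'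
    using wf that by (simp add: wf_fcs_def)
  show ?thesis
    unfolding wf_fcs_def split_latent_simps
  proof (intro conjI allI impI)
    show "\<not> (A_to_B S \<and> B_to_A S)" using wf by (simp add: wf_fcs_def)
    show "(if j \<in> parA S then insert (nlat S) (parA S) else parA S) \<subseteq> {..<Suc (nlat S)}"
      "(if j \<in> parB S then insert (nlat S) (parB S) else parB S) \<subseteq> {..<Suc (nlat S)}"
      using pars by auto
    show "2 \<le> ((card_lat S)(j := card_lat S j - 1, nlat S := 2)) i" if "i < Suc (nlat S)" for i
      using wf k that by (auto simp: wf_fcs_def less_Suc_eq)
  next
    fix l l' :: "nat \<Rightarrow> nat" and b b' :: bool
    assume "(\<forall>i\<in>(if j \<in> parA S then insert (nlat S) (parA S) else parA S). l i = l' i)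
      \<and> (B_to_A S \<longrightarrow> b = b')"
    then show "fA S (merge_assignment S j l) b = fA S (merge_assignment S j l') b'"
      using merge_assignment_agree[OF pars(1)] by (intro locA) auto
  next
    fix l l' :: "nat \<Rightarrow> nat" and a a' :: bool
    assume "(\<forall>i\<in>(if j \<in> parB S then insert (nlat S) (parB S) else parB S). l i = l' i)
      \<and> (A_to_B S \<longrightarrow> a = a')"
    then show "fB S (merge_assignment S j l) a = fB S (merge_assignment S j l') a'"
      using merge_assignment_agree[OF pars(2)] by (intro locB) auto
  qed
qed

lemma finite_assignments: "finite (assignments S)"
proof (rule finite_subset)
  let ?N = "\<Sum>i<nlat S. card_lat S i"
  show "assignments S \<subseteq>
      {l. \<forall>i. (i \<in> {..<nlat S} \<longrightarrow> l i \<in> {..<?N}) \<and> (i \<notin> {..<nlat S} \<longrightarrow> l i = 0)}"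
  proof (intro subsetI CollectI allI conjI impI)
    fix l i assume l: "l \<in> assignments S"
    show "l i = 0" if "i \<notin> {..<nlat S}" using l that by (simp add: assignments_def)
    assume i: "i \<in> {..<nlat S}"
    with l have "l i < card_lat S i" by (simp add: assignments_def)
    also have "card_lat S i \<le> ?N" using i by (intro member_le_sum) auto
    finally show "l i \<in> {..<?N}" by simp
  qed
  show "finite {l. \<forall>i. (i \<in> {..<nlat S} \<longrightarrow> l i \<in> {..<?N}) \<and> (i \<notin> {..<nlat S} \<longrightarrow> l i = 0)}"
    by (rule finite_set_of_finite_funs) auto
qed

lemma merge_assignment_in_assignments:
  assumes j: "j < nlat S" and l: "l \<in> assignments (split_latent S j)"
  shows "merge_assignment S j l \<in> assignments S"
proof -
  have "l i < ((card_lat S)(j := card_lat S j - 1, nlat S := 2)) i" if "i < Suc (nlat S)" for i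
    using l that by (simp add: assignments_def split_latent_simps)
  moreover have "l i = 0" if "Suc (nlat S) \<le> i" for i
    using l that by (simp add: assignments_def split_latent_simps)
  ultimately show ?thesis
    using j by (fastforce simp: assignments_def merge_assignment_def merged_value_def
        less_Suc_eq not_less_eq_eq)
qed

lemma merge_assignment_fiber:
  assumes j: "j < nlat S" and m: "m \<in> assignments S"
  shows "{l \<in> assignments (split_latent S j). merge_assignment S j l = m} =
    (\<lambda>(x, y). m(j := x, nlat S := y)) `
      {(x, y). x < card_lat S j - 1 \<and> y < 2 \<and> merged_value (card_lat S j) x y = m j}"
    (is "?F = _ ` ?P")
proof (intro set_eqI iffI)
  fix l assume "l \<in> ?F"
  then have l: "l \<in> assignments (split_latent S j)" and merge: "merge_assignment S j l = m"
    by auto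
  have "l = m(j := l j, nlat S := l (nlat S))"
  proof
    fix i show "l i = (m(j := l j, nlat S := l (nlat S))) i"
      using fun_cong[OF merge, of i] by (auto simp: merge_assignment_def)
  qed
  moreover have "l i < ((card_lat S)(j := card_lat S j - 1, nlat S := 2)) i" if "i < Suc (nlat S)" for i
    using l that by (simp add: assignments_def split_latent_simps)
  from this[of j] this[of "nlat S"] j have "l j < card_lat S j - 1" "l (nlat S) < 2"
    by simp_all
  then have "(l j, l (nlat S)) \<in> ?P"
    using j fun_cong[OF merge, of j] by (simp add: merge_assignment_def)
  ultimately show "l \<in> (\<lambda>(x, y). m(j := x, nlat S := y)) ` ?P"
    by (intro image_eqI[of _ _ "(l j, l (nlat S))"]) auto
next
  fix l assume "l \<in> (\<lambda>(x, y). m(j := x, nlat S := y)) ` ?P"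
  then obtain x y where l: "l = m(j := x, nlat S := y)" and "(x, y) \<in> ?P" by auto
  with j m show "l \<in> ?F"
    by (auto simp: assignments_def split_latent_simps merge_assignment_def less_Suc_eq
        intro!: ext)
qed

definition merge_dist :: "fcs \<Rightarrow> nat \<Rightarrow> (nat \<Rightarrow> nat \<Rightarrow> real) \<Rightarrow> nat \<Rightarrow> nat \<Rightarrow> real" where
  "merge_dist S j p = p(j := merged_prob (card_lat S j) (p j) (p (nlat S)))"

lemma sum_merge_assignment_fiber:
  assumes j: "j < nlat S" and k: "3 \<le> card_lat S j" and m: "m \<in> assignments S"
    and bin: "p (nlat S) 0 + p (nlat S) 1 = 1"
  shows "(\<Sum>l | l \<in> assignments (split_latent S j) \<and> merge_assignment S j l = m.
            \<Prod>i<Suc (nlat S). p i (l i))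
         = (\<Prod>i<nlat S. merge_dist S j p i (m i))"
proof -
  let ?n = "nlat S" and ?k = "card_lat S j"
  let ?R = "\<Prod>i\<in>{..<?n} - {j}. p i (m i)"
  let ?P = "{(x, y). x < ?k - 1 \<and> y < 2 \<and> merged_value ?k x y = m j}"
  have prod_update: "(\<Prod>i<Suc ?n. p i ((m(j := x, ?n := y)) i)) = p j x * p ?n y * ?R" for x y
  proof -
    have "(\<Prod>i<Suc ?n. p i ((m(j := x, ?n := y)) i)) = (\<Prod>i<?n. p i ((m(j := x, ?n := y)) i)) * p ?n y"
      by simp
    also have "(\<Prod>i<?n. p i ((m(j := x, ?n := y)) i)) = (\<Prod>i<?n. p i ((m(j := x)) i))"
      by (rule prod.cong) auto
    also have "(\<Prod>i<?n. p i ((m(j := x)) i)) = p j x * (\<Prod>i\<in>{..<?n} - {j}. p i ((m(j := x)) i))"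
      using j by (simp add: prod.remove[of "{..<?n}" j])
    also have "(\<Prod>i\<in>{..<?n} - {j}. p i ((m(j := x)) i)) = ?R"
      by (rule prod.cong) auto
    finally show ?thesis by (simp only: mult_ac)
  qed
  have inj: "inj_on (\<lambda>(x, y). m(j := x, ?n := y)) ?P"
    using j by (auto simp: inj_on_def dest: fun_cong[of _ _ j] fun_cong[of _ _ ?n])
  have "(\<Sum>l | l \<in> assignments (split_latent S j) \<and> merge_assignment S j l = m.
            \<Prod>i<Suc ?n. p i (l i))
      = (\<Sum>(x, y)\<in>?P. p j x * p ?n y * ?R)"
    unfolding merge_assignment_fiber[OF j m] sum.reindex[OF inj]
    by (simp only: comp_def case_prod_unfold prod_update)
  also have "\<dots> = (\<Sum>(x, y)\<in>?P. p j x * p ?n y) * ?R"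
    by (simp add: sum_distrib_right case_prod_unfold)
  also have "\<dots> = merged_prob ?k (p j) (p ?n) (m j) * ?R"
    using m j by (subst sum_merged_value_fiber[OF k _ bin]) (simp_all add: assignments_def)
  also have "?R = (\<Prod>i\<in>{..<?n} - {j}. merge_dist S j p i (m i))"
    by (rule prod.cong) (auto simp: merge_dist_def)
  also have "merged_prob ?k (p j) (p ?n) (m j) * \<dots> = (\<Prod>i<?n. merge_dist S j p i (m i))"
    using j by (simp add: merge_dist_def prod.remove[of "{..<?n}" j])
  finally show ?thesis .
qed

lemma latent_dist_split_latent_bit:
  assumes "latent_dist (split_latent S j) p"
  shows "p (nlat S) 0 + p (nlat S) 1 = 1"
proof -
  from assms have "(\<Sum>v<((card_lat S)(j := card_lat S j - 1, nlat S := 2)) (nlat S). p (nlat S) v) = 1"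
    unfolding latent_dist_def split_latent_simps by blast
  then show ?thesis by (simp add: numeral_2_eq_2)
qed

lemma induced_split_latent:
  assumes j: "j < nlat S" and k: "3 \<le> card_lat S j"
    and p: "latent_dist (split_latent S j) p"
  shows "induced (split_latent S j) p = induced S (merge_dist S j p)"
proof (intro ext)
  fix a b
  have bin: "p (nlat S) 0 + p (nlat S) 1 = 1"
    by (rule latent_dist_split_latent_bit[OF p])
  define g where "g m = (if obs S m = (a, b) then 1 else 0 :: real)" for m
  have "induced (split_latent S j) p a b =
      (\<Sum>l\<in>assignments (split_latent S j). (\<Prod>i<Suc (nlat S). p i (l i)) * g (merge_assignment S j l))"
    by (simp add: induced_def g_def obs_split_latent split_latent_simps)
  also have "\<dots> = (\<Sum>m\<in>assignments S.
      \<Sum>l | l \<in> assignments (split_latent S j) \<and> merge_assignment S j l = m.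
        (\<Prod>i<Suc (nlat S). p i (l i)) * g (merge_assignment S j l))"
    by (rule sum.group[symmetric])
      (use finite_assignments merge_assignment_in_assignments[OF j] in auto)
  also have "\<dots> = (\<Sum>m\<in>assignments S. (\<Prod>i<nlat S. merge_dist S j p i (m i)) * g m)"
  proof (rule sum.cong[OF refl])
    fix m assume m: "m \<in> assignments S"
    have "(\<Sum>l | l \<in> assignments (split_latent S j) \<and> merge_assignment S j l = m.
          (\<Prod>i<Suc (nlat S). p i (l i)) * g (merge_assignment S j l)) =
        (\<Sum>l | l \<in> assignments (split_latent S j) \<and> merge_assignment S j l = m.
          \<Prod>i<Suc (nlat S). p i (l i)) * g m"
      by (simp add: sum_distrib_right)
    then show "(\<Sum>l | l \<in> assignments (split_latent S j) \<and> merge_assignment S j l = m.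
          (\<Prod>i<Suc (nlat S). p i (l i)) * g (merge_assignment S j l)) =
        (\<Prod>i<nlat S. merge_dist S j p i (m i)) * g m"
      by (simp only: sum_merge_assignment_fiber[where p = p, OF j k m bin])
  qed
  also have "\<dots> = induced S (merge_dist S j p) a b"
    by (simp add: induced_def g_def)
  finally show "induced (split_latent S j) p a b = induced S (merge_dist S j p) a b" .
qed

lemma induced_cong:
  assumes "\<And>i v. i < nlat S \<Longrightarrow> v < card_lat S i \<Longrightarrow> p i v = q i v"
  shows "induced S p = induced S q"
  using assms by (intro ext sum.cong prod.cong arg_cong2[where f = "(*)"] refl)
    (auto simp: induced_def assignments_def)

lemma latent_dist_merge_dist:
  assumes j: "j < nlat S" and k: "3 \<le> card_lat S j"
    and p: "latent_dist (split_latent S j) p"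
  shows "latent_dist S (merge_dist S j p)"
proof -
  let ?n = "nlat S" and ?k = "card_lat S j"
  have nontrivial: "0 < p i v \<and> p i v < 1"
    if "i < Suc ?n" "v < ((card_lat S)(j := ?k - 1, ?n := 2)) i" for i v
    using p that by (simp add: latent_dist_def split_latent_simps)
  have total: "(\<Sum>v<((card_lat S)(j := ?k - 1, ?n := 2)) i. p i v) = 1" if "i < Suc ?n" for i
    using p that by (simp add: latent_dist_def split_latent_simps)
  have bin: "p ?n 0 + p ?n 1 = 1"
    by (rule latent_dist_split_latent_bit[OF p])
  have "0 < p ?n y" "p ?n y < 1" if "y < 2" for y
    using nontrivial[of ?n y] that by auto
  moreover have "0 < p j v \<and> p j v < 1" if "v < ?k - 1" for v
    using nontrivial[of j v] that j by simp
  moreover have "(\<Sum>v<?k - 1. p j v) = 1"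
    using total[of j] j by simp
  moreover have "(\<forall>v<card_lat S i. 0 < p i v \<and> p i v < 1) \<and> (\<Sum>v<card_lat S i. p i v) = 1"
    if "i < ?n" "i \<noteq> j" for i
    using nontrivial[of i] total[of i] that by simp
  ultimately show ?thesis
    using k by (auto simp: latent_dist_def merge_dist_def merged_prob_bounds sum_merged_prob[OF k bin])
qed

definition split_dist :: "fcs \<Rightarrow> nat \<Rightarrow> (nat \<Rightarrow> nat \<Rightarrow> real) \<Rightarrow> nat \<Rightarrow> nat \<Rightarrow> real" where
  "split_dist S j p = p(j := lump_prob (card_lat S j) (p j),
                        nlat S := lump_bit_prob (card_lat S j) (p j))"

lemma latent_dist_split_dist:
  assumes j: "j < nlat S" and k: "3 \<le> card_lat S j" and p: "latent_dist S p"
  shows "latent_dist (split_latent S j) (split_dist S j p)"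
proof -
  let ?k = "card_lat S j"
  have pj: "\<And>v. v < ?k \<Longrightarrow> 0 < p j v \<and> p j v < 1" and sum_pj: "(\<Sum>v<?k. p j v) = 1"
    using p j by (auto simp: latent_dist_def)
  then have "0 < p j (?k - 2) + p j (?k - 1)" using k by (simp add: add_pos_pos)
  then have "lump_bit_prob ?k (p j) 0 + lump_bit_prob ?k (p j) 1 = 1"
    by (intro sum_lump_bit_prob) simp
  moreover have "(\<Sum>v<?k - 1. lump_prob ?k (p j) v) = 1"
    using sum_lump_prob[of ?k "p j"] k sum_pj by simp
  ultimately show ?thesis
    using p j k pj sum_pj
    by (auto simp: latent_dist_def split_latent_simps split_dist_def less_Suc_eq numeral_2_eq_2
        lump_prob_bounds lump_bit_prob_bounds)
qed

lemma joint_dists_split_latent: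
  assumes j: "j < nlat S" and k: "3 \<le> card_lat S j"
  shows "joint_dists (split_latent S j) = joint_dists S"
proof (intro set_eqI iffI)
  fix P assume "P \<in> joint_dists (split_latent S j)"
  then obtain p where "latent_dist (split_latent S j) p" "P = induced (split_latent S j) p"
    by (auto simp: joint_dists_def)
  then show "P \<in> joint_dists S"
    using latent_dist_merge_dist[OF j k] induced_split_latent[OF j k]
    by (auto simp: joint_dists_def)
next
  fix P assume "P \<in> joint_dists S"
  then obtain p where p: "latent_dist S p" and P: "P = induced S p"
    by (auto simp: joint_dists_def)
  have split: "latent_dist (split_latent S j) (split_dist S j p)"
    by (rule latent_dist_split_dist[OF j k p])
  have "0 < p j (card_lat S j - 2) + p j (card_lat S j - 1)"
    using p j k by (simp add: latent_dist_def add_pos_pos)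
  then have "merge_dist S j (split_dist S j p) i v = p i v"
    if "i < nlat S" "v < card_lat S i" for i v
    using that j k by (auto simp: merge_dist_def split_dist_def merged_prob_lump)
  then have "induced S (merge_dist S j (split_dist S j p)) = P"
    unfolding P by (rule induced_cong)
  then show "P \<in> joint_dists (split_latent S j)"
    using split induced_split_latent[OF j k split] by (auto simp: joint_dists_def)
qed

definition latent_excess :: "fcs \<Rightarrow> nat" where
  "latent_excess S = (\<Sum>i<nlat S. card_lat S i - 2)"

lemma latent_excess_split_latent:
  assumes j: "j < nlat S" and k: "3 \<le> card_lat S j"
  shows "latent_excess (split_latent S j) < latent_excess S"
proof -
  have "latent_excess (split_latent S j) = (\<Sum>i<nlat S. ((card_lat S)(j := card_lat S j - 1)) i - 2)"
    using j by (simp add: latent_excess_def split_latent_simps)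
  also have "\<dots> < latent_excess S"
    unfolding latent_excess_def by (rule sum_strict_mono_ex1) (use j k in auto)
  finally show ?thesis .
qed

theorem theorem1:
  assumes "wf_fcs S"
  shows "\<exists>T. wf_fcs T \<and> binary_fcs T \<and> obs_equiv S T"
  using assms
proof (induction "latent_excess S" arbitrary: S rule: less_induct)
  case less
  show ?case
  proof (cases "\<exists>j<nlat S. 3 \<le> card_lat S j")
    case True
    then obtain j where j: "j < nlat S" and k: "3 \<le> card_lat S j" by auto
    from less.hyps[OF latent_excess_split_latent[OF j k] wf_split_latent[OF less.prems k]]
    obtain T where "wf_fcs T" "binary_fcs T" "obs_equiv (split_latent S j) T" by blast
    then show ?thesis
      using joint_dists_split_latent[OF j k] by (auto simp: obs_equiv_def)
  next
    case False
    with less.prems have "binary_fcs S"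
      by (force simp: wf_fcs_def binary_fcs_def)
    with less.prems show ?thesis by (auto simp: obs_equiv_def)
  qed
qed

end
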